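(* In the semi-classical setting, with $\Theta_n,\Omega_n$ as in the context, for every $n\ge 1$: $$\Omega_{n+1}(z) = (z-b_n)\Theta_n(z) - \Omega_n(z),$$ $$(z-b_n)\big(\Omega_{n+1}(z)-\Omega_n(z)\big) = W(z) + a_{n+1}^2\Theta_{n+1}(z) - a_n^2\Theta_{n-1}(z),$$ $$\Omega_n(z)^2 - a_n^2\Theta_n(z)\Theta_{n-1}(z) = V(z)^2 + W(z)\sum_{i=0}^{n-1}\Theta_i(z).$$
   Context: Let $(\mu_k)_{k\ge 0}$ be complex numbers such that all Hankel determinants $\det(\mu_{i+j})_{0\le i,j\le n}$ are nonzero; $\mathcal L(x^k)=\mu_k$; $p_n(z)=\gamma_n z^n+\cdots$ ($\gamma_n\ne0$) orthonormal: $\mathcal L(p_np_m)=\delta_{n,m}$; recurrence $a_{n+1}p_{n+1}(z)=(z-b_n)p_n(z)-a_np_{n-1}(z)$, $p_{-1}=0$, $a_n=\gamma_{n-1}/\gamma_n$. $f(z)=\sum_{k\ge0}\mu_k z^{-k-1}$ (formal series); $p^{(1)}_{n-1}$ is the polynomial part of $fp_n$ and $\varepsilon_n=fp_n-p^{(1)}_{n-1}$. Semi-classical: polynomials $W\not\equiv0,V,U$ with $Wf'=2Vf+U$. For $n\ge0$, $\Theta_n = W(\varepsilon_n p_n' - \varepsilon_n' p_n) + 2V\varepsilon_n p_n$, and for $n\ge1$, $\Omega_n = a_n W(\varepsilon_{n-1}p_n' - \varepsilon_n' p_{n-1}) + a_n V(\varepsilon_{n-1}p_n + \varepsilon_n p_{n-1})$;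 these are polynomials in $z$. *)

theory Defs
  imports "HOL-Computational_Algebra.Computational_Algebra" "Jordan_Normal_Form.Determinant"
begin

definition hankel :: "(nat \<Rightarrow> complex) \<Rightarrow> nat \<Rightarrow> complex mat" where
  "hankel mu n = mat (n+1) (n+1) (\<lambda>(i,j). mu (i+j))"

definition momL :: "(nat \<Rightarrow> complex) \<Rightarrow> complex poly \<Rightarrow> complex" where
  "momL mu q = (\<Sum>k\<le>degree q. coeff q k * mu k)"

(* Formal series in z with finitely many positive powers of z are represented as
   formal Laurent series in the variable w = 1/z: z^j corresponds to w^(-j). *)
definition zser :: "complex poly \<Rightarrow> complex fls" where
  "zser q = (\<Sum>j\<le>degree q. fls_const (coeff q j) * fls_X_intpow (- int j))"

(* derivative with respect to z: d/dz = - w^2 d/dw *)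
definition zderiv :: "complex fls \<Rightarrow> complex fls" where
  "zderiv F = - (fls_X ^ 2 * fls_deriv F)"

(* f(z) = sum_k mu_k z^(-k-1) = sum_k mu_k w^(k+1) *)
definition stieltjes :: "(nat \<Rightarrow> complex) \<Rightarrow> complex fls" where
  "stieltjes mu = fps_to_fls (Abs_fps (\<lambda>k. if k = 0 then 0 else mu (k - 1)))"

(* polynomial part (in z) of a series: terms z^j with j >= 0, i.e. w-exponents <= 0 *)
definition poly_part :: "complex fls \<Rightarrow> complex fls" where
  "poly_part F = (\<Sum>j\<in>{fls_subdegree F..0}. fls_const (fls_nth F j) * fls_X_intpow j)"

(* epsilon_n = f p_n - p^(1)_(n-1) *)
definition eps :: "(nat \<Rightarrow> complex) \<Rightarrow> (nat \<Rightarrow> complex poly) \<Rightarrow> nat \<Rightarrow> complex fls" where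
  "eps mu p n = stieltjes mu * zser (p n) - poly_part (stieltjes mu * zser (p n))"

definition rec_a :: "(nat \<Rightarrow> complex poly) \<Rightarrow> nat \<Rightarrow> complex" where
  "rec_a p n = lead_coeff (p (n - 1)) / lead_coeff (p n)"

definition Theta :: "(nat \<Rightarrow> complex) \<Rightarrow> (nat \<Rightarrow> complex poly) \<Rightarrow> complex poly \<Rightarrow> complex poly
    \<Rightarrow> nat \<Rightarrow> complex fls" where
  "Theta mu p W V n =
     zser W * (eps mu p n * zser (pderiv (p n)) - zderiv (eps mu p n) * zser (p n))
     + 2 * zser V * eps mu p n * zser (p n)"

definition Omega :: "(nat \<Rightarrow> complex) \<Rightarrow> (nat \<Rightarrow> complex poly) \<Rightarrow> complex poly \<Rightarrow> complex poly
    \<Rightarrow> nat \<Rightarrow> complex fls" where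
  "Omega mu p W V n =
     fls_const (rec_a p n) * zser W *
        (eps mu p (n - 1) * zser (pderiv (p n)) - zderiv (eps mu p n) * zser (p (n - 1)))
     + fls_const (rec_a p n) * zser V *
        (eps mu p (n - 1) * zser (p n) + eps mu p n * zser (p (n - 1)))"

end

theory Submission
  imports Defs
begin

(* Both p_n and \<epsilon>_n satisfy the three-term recurrence (for \<epsilon>_n the term L(p_n) appears,
   which vanishes for n \<ge> 1), so their Casorati determinant a_n (\<epsilon>_(n-1) p_n - \<epsilon>_n p_(n-1))
   is constant, equal to 1, and its derivative vanishes.  Substituting the recurrences
   into \<Theta>_(n+1) and \<Omega>_(n+1) and reducing modulo these two relations gives the first two
   identities.  Together they show that \<Omega>_n^2 - a_n^2 \<Theta>_n \<Theta>_(n-1) - W \<Sum>_(i<n) \<Theta>_i does not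
   depend on n, and the Pearson equation W f' = 2 V f + U evaluates it at n = 1 to V^2. *)

(* D plays d/dz, A m the constant a_m, u m the linear factor z - b_m, P m and E m the
   polynomials p_m and the series \<epsilon>_m. *)
locale casorati_system =
  fixes D :: "'a::comm_ring_1 \<Rightarrow> 'a"
    and A u P E :: "nat \<Rightarrow> 'a"
    and W V :: 'a
  assumes D_add: "\<And>x y. D (x + y) = D x + D y"
    and D_mult: "\<And>x y. D (x * y) = x * D y + D x * y"
    and D_A: "\<And>m. D (A m) = 0"
    and D_u: "\<And>m. D (u m) = 1"
    and P_rec: "\<And>m. m \<ge> 1 \<Longrightarrow> A (m + 1) * P (m + 1) = u m * P m - A m * P (m - 1)"
    and E_rec: "\<And>m. m \<ge> 1 \<Longrightarrow> A (m + 1) * E (m + 1) = u m * E m - A m * E (m - 1)"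
    and casorati_1: "A 1 * (E 0 * P 1 - E 1 * P 0) = 1"
begin

lemma D_1: "D 1 = 0"
  using D_mult[of 1 1] by simp

lemma D_diff: "D (x - y) = D x - D y"
proof -
  have "D (x - y) + D y = D x"
    using D_add[of "x - y" y] by simp
  then show ?thesis
    by (simp add: algebra_simps)
qed

lemma D_three_term:
  assumes "A k * R = u m * Q - A l * S"
  shows "A k * D R = Q + u m * D Q - A l * D S"
proof -
  have "A k * D R = D (A k * R)"
    by (simp add: D_mult D_A)
  also have "\<dots> = D (u m * Q - A l * S)"
    by (simp only: assms)
  finally show ?thesis
    by (simp add: D_diff D_mult D_A D_u)
qed

lemma P_deriv_rec: "m \<ge> 1 \<Longrightarrow> A (m + 1) * D (P (m + 1)) = P m + u m * D (P m) - A m * D (P (m - 1))"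
  by (rule D_three_term[OF P_rec])

lemma E_deriv_rec: "m \<ge> 1 \<Longrightarrow> A (m + 1) * D (E (m + 1)) = E m + u m * D (E m) - A m * D (E (m - 1))"
  by (rule D_three_term[OF E_rec])

lemma casorati: "m \<ge> 1 \<Longrightarrow> A m * (E (m - 1) * P m - E m * P (m - 1)) = 1"
proof (induction m rule: nat_induct_at_least)
  case base
  show ?case using casorati_1 by simp
next
  case (Suc m)
  have "A (Suc m) * (E (Suc m - 1) * P (Suc m) - E (Suc m) * P (Suc m - 1))
      = E m * (A (m + 1) * P (m + 1)) - A (m + 1) * E (m + 1) * P m"
    by (simp add: algebra_simps)
  also have "\<dots> = A m * (E (m - 1) * P m - E m * P (m - 1))"
    unfolding P_rec[OF Suc.hyps] E_rec[OF Suc.hyps] by (simp add: algebra_simps)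
  finally show ?case
    using Suc.IH by simp
qed

lemma casorati_deriv:
  assumes "m \<ge> 1"
  shows "A m * (D (E (m - 1)) * P m + E (m - 1) * D (P m) - D (E m) * P (m - 1) - E m * D (P (m - 1))) = 0"
proof -
  have "D (A m * (E (m - 1) * P m - E m * P (m - 1))) = 0"
    unfolding casorati[OF assms] by (rule D_1)
  then show ?thesis
    by (simp add: D_mult D_diff D_A algebra_simps)
qed

definition theta :: "nat \<Rightarrow> 'a" where
  "theta m = W * (E m * D (P m) - D (E m) * P m) + 2 * V * E m * P m"

definition omega :: "nat \<Rightarrow> 'a" where
  "omega m = A m * W * (E (m - 1) * D (P m) - D (E m) * P (m - 1))
     + A m * V * (E (m - 1) * P m + E m * P (m - 1))"

lemma omega_Suc:
  assumes "m \<ge> 1"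
  shows "omega (m + 1) = u m * theta m - omega m"
proof -
  have "omega (m + 1)
      = W * (E m * (A (m + 1) * D (P (m + 1))) - A (m + 1) * D (E (m + 1)) * P m)
        + V * (E m * (A (m + 1) * P (m + 1)) + A (m + 1) * E (m + 1) * P m)"
    by (simp add: omega_def algebra_simps)
  also have "\<dots> = u m * theta m - omega m
      + W * (A m * (D (E (m - 1)) * P m + E (m - 1) * D (P m) - D (E m) * P (m - 1) - E m * D (P (m - 1))))"
    unfolding P_rec[OF assms] E_rec[OF assms] P_deriv_rec[OF assms] E_deriv_rec[OF assms]
    by (simp add: theta_def omega_def algebra_simps)
  finally show ?thesis
    unfolding casorati_deriv[OF assms] by simp
qed

lemma omega_diff:
  assumes "m \<ge> 1"
  shows "u m * (omega (m + 1) - omega m) = W + A (m + 1) ^ 2 * theta (m + 1) - A m ^ 2 * theta (m - 1)"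
proof -
  let ?c = "A m * (E (m - 1) * P m - E m * P (m - 1))"
  let ?c' = "A m * (D (E (m - 1)) * P m + E (m - 1) * D (P m) - D (E m) * P (m - 1) - E m * D (P (m - 1)))"
  have "A (m + 1) ^ 2 * theta (m + 1)
      = W * (A (m + 1) * E (m + 1) * (A (m + 1) * D (P (m + 1)))
             - A (m + 1) * D (E (m + 1)) * (A (m + 1) * P (m + 1)))
        + 2 * V * (A (m + 1) * E (m + 1)) * (A (m + 1) * P (m + 1))"
    by (simp add: theta_def algebra_simps power2_eq_square)
  also have "\<dots> = W * ((u m * E m - A m * E (m - 1)) * (P m + u m * D (P m) - A m * D (P (m - 1)))
             - (E m + u m * D (E m) - A m * D (E (m - 1))) * (u m * P m - A m * P (m - 1)))
        + 2 * V * (u m * E m - A m * E (m - 1)) * (u m * P m - A m * P (m - 1))"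
    unfolding P_rec[OF assms] E_rec[OF assms] P_deriv_rec[OF assms] E_deriv_rec[OF assms] ..
  finally have theta_Suc: "A (m + 1) ^ 2 * theta (m + 1) = \<dots>" .
  have "u m * (omega (m + 1) - omega m)
      = W + A (m + 1) ^ 2 * theta (m + 1) - A m ^ 2 * theta (m - 1) - W * (1 - ?c) - u m * W * ?c'"
    unfolding omega_Suc[OF assms] theta_Suc
    by (simp add: theta_def omega_def algebra_simps power2_eq_square)
  then show ?thesis
    unfolding casorati[OF assms] casorati_deriv[OF assms] by simp
qed

lemma omega_sq_Suc:
  assumes "m \<ge> 1"
  shows "omega (m + 1) ^ 2 - A (m + 1) ^ 2 * theta (m + 1) * theta m
    = omega m ^ 2 - A m ^ 2 * theta m * theta (m - 1) + W * theta m"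
proof -
  have "omega (m + 1) ^ 2 - omega m ^ 2 = u m * (omega (m + 1) - omega m) * theta m"
    unfolding omega_Suc[OF assms] by (simp add: algebra_simps power2_eq_square)
  then show ?thesis
    unfolding omega_diff[OF assms] by (simp add: algebra_simps)
qed

lemma omega_sq_telescope:
  assumes "m \<ge> 1"
  shows "omega m ^ 2 - A m ^ 2 * theta m * theta (m - 1) - W * (\<Sum>i<m. theta i)
    = omega 1 ^ 2 - A 1 ^ 2 * theta 1 * theta 0 - W * theta 0"
  using assms
proof (induction m rule: nat_induct_at_least)
  case (Suc m)
  have "omega (Suc m) ^ 2 - A (Suc m) ^ 2 * theta (Suc m) * theta (Suc m - 1) - W * (\<Sum>i<Suc m. theta i)
      = (omega (m + 1) ^ 2 - A (m + 1) ^ 2 * theta (m + 1) * theta m) - W * theta m - W * (\<Sum>i<m. theta i)"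
    by (simp add: algebra_simps)
  also have "\<dots> = omega m ^ 2 - A m ^ 2 * theta m * theta (m - 1) - W * (\<Sum>i<m. theta i)"
    unfolding omega_sq_Suc[OF Suc.hyps] by (simp add: algebra_simps)
  finally show ?case
    unfolding Suc.IH .
qed simp

lemma omega_sq_initial:
  assumes P0_const: "D (P 0) = 0" and E0: "E 0 = f * P 0"
    and P1: "A 1 * P 1 = u 0 * P 0" and E1: "A 1 * E 1 = u 0 * E 0 - s"
    and s_const: "D s = 0" and s_inverse: "s * P 0 = 1"
    and pearson: "W * D f = 2 * V * f + U"
  shows "omega 1 ^ 2 - A 1 ^ 2 * theta 1 * theta 0 = V ^ 2 + W * theta 0"
proof -
  have "A 1 * D (P 1) = D (A 1 * P 1)"
    by (simp add: D_mult D_A)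
  then have dP1: "A 1 * D (P 1) = P 0"
    unfolding P1 by (simp add: D_mult D_u P0_const)
  have "A 1 * D (E 1) = D (A 1 * E 1)"
    by (simp add: D_mult D_A)
  then have dE1: "A 1 * D (E 1) = f * P 0 + u 0 * (D f * P 0)"
    unfolding E1 E0 by (simp add: D_diff D_mult D_u P0_const s_const)
  have "omega 1 = W * (E 0 * (A 1 * D (P 1)) - A 1 * D (E 1) * P 0) + V * (E 0 * (A 1 * P 1) + A 1 * E 1 * P 0)"
    by (simp add: omega_def algebra_simps)
  also have "\<dots> = W * (f * P 0 * P 0 - (f * P 0 + u 0 * (D f * P 0)) * P 0)
      + V * (f * P 0 * (u 0 * P 0) + (u 0 * (f * P 0) - s) * P 0)"
    unfolding dP1 dE1 P1 E1 E0 ..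
  also have "\<dots> = - u 0 * P 0 ^ 2 * (W * D f) + 2 * u 0 * P 0 ^ 2 * V * f - s * P 0 * V"
    by (simp add: algebra_simps power2_eq_square)
  finally have omega1: "omega 1 = - u 0 * P 0 ^ 2 * U - V"
    unfolding s_inverse pearson by (simp add: algebra_simps)
  have "A 1 ^ 2 * theta 1
      = W * (A 1 * E 1 * (A 1 * D (P 1)) - A 1 * D (E 1) * (A 1 * P 1)) + 2 * V * (A 1 * E 1) * (A 1 * P 1)"
    by (simp add: theta_def algebra_simps power2_eq_square)
  also have "\<dots> = W * ((u 0 * (f * P 0) - s) * P 0 - (f * P 0 + u 0 * (D f * P 0)) * (u 0 * P 0))
      + 2 * V * (u 0 * (f * P 0) - s) * (u 0 * P 0)"
    unfolding dP1 dE1 P1 E1 E0 ..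
  also have "\<dots> = - (s * P 0) * W - u 0 ^ 2 * P 0 ^ 2 * (W * D f) + 2 * u 0 ^ 2 * P 0 ^ 2 * V * f
      - 2 * u 0 * (s * P 0) * V"
    by (simp add: algebra_simps power2_eq_square)
  finally have theta1: "A 1 ^ 2 * theta 1 = - W - u 0 ^ 2 * P 0 ^ 2 * U - 2 * u 0 * V"
    unfolding s_inverse pearson by (simp add: algebra_simps)
  have "theta 0 = - (P 0 ^ 2 * (W * D f)) + 2 * P 0 ^ 2 * V * f"
    unfolding theta_def E0 by (simp add: D_mult P0_const algebra_simps power2_eq_square)
  then have theta0: "theta 0 = - (P 0 ^ 2 * U)"
    unfolding pearson by (simp add: algebra_simps)
  have "omega 1 ^ 2 - A 1 ^ 2 * theta 1 * theta 0 = omega 1 ^ 2 - (A 1 ^ 2 * theta 1) * theta 0"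
    by (simp add: algebra_simps)
  then show ?thesis
    unfolding omega1 theta1 theta0 by (simp add: algebra_simps power2_eq_square)
qed

end

lemma zser_nth: "fls_nth (zser q) k = (if k \<le> 0 then coeff q (nat (- k)) else 0)"
proof -
  have "fls_nth (zser q) k = (\<Sum>j\<le>degree q. if k = - int j then coeff q j else 0)"
    unfolding zser_def fls_nth_sum by (intro sum.cong) auto
  also have "\<dots> = (\<Sum>j\<in>{..degree q} \<inter> {j. k = - int j}. coeff q j)"
    by (simp add: sum.inter_restrict if_distrib)
  also have "\<dots> = (if k \<le> 0 then coeff q (nat (- k)) else 0)"
  proof (cases "k \<le> 0 \<and> nat (- k) \<le> degree q")
    case True
    then have "{..degree q} \<inter> {j. k = - int j} = {nat (- k)}"
      by auto
    then show ?thesis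
      using True by simp
  next
    case False
    then have "{..degree q} \<inter> {j. k = - int j} = {}"
      by auto
    then show ?thesis
      using False by (auto simp: coeff_eq_0)
  qed
  finally show ?thesis .
qed

lemma zser_0 [simp]: "zser 0 = 0"
  by (rule fls_eqI) (simp add: zser_nth)

lemma zser_add: "zser (q + r) = zser q + zser r"
  by (rule fls_eqI) (simp add: zser_nth)

lemma zser_diff: "zser (q - r) = zser q - zser r"
  by (rule fls_eqI) (simp add: zser_nth)

lemma zser_smult: "zser (Polynomial.smult c q) = fls_const c * zser q"
  by (rule fls_eqI) (simp add: zser_nth)

lemma zser_pCons: "zser (pCons c q) = fls_const c + fls_X_inv * zser q"
proof (rule fls_eqI)
  fix k :: int
  show "fls_nth (zser (pCons c q)) k = fls_nth (fls_const c + fls_X_inv * zser q) k"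
  proof (cases "k < 0")
    case True
    then have "nat (- k) = Suc (nat (- (k + 1)))"
      by simp
    then show ?thesis
      using True by (simp add: zser_nth fls_X_inv_times_conv_shift)
  qed (auto simp: zser_nth fls_X_inv_times_conv_shift)
qed

lemma zser_mult: "zser (q * r) = zser q * zser r"
proof (induction q rule: pCons_induct)
  case (pCons c q)
  have "pCons c q * r = Polynomial.smult c r + pCons 0 (q * r)"
    by simp
  then show ?case
    using pCons by (simp add: zser_add zser_smult zser_pCons algebra_simps)
qed simp

lemma zser_const: "zser [:c:] = fls_const c"
  by (simp add: zser_pCons)

lemma zser_linear: "zser [:- c, 1:] = fls_X_inv - fls_const c"
  by (simp add: zser_pCons)

lemma zderiv_add: "zderiv (F + G) = zderiv F + zderiv G"
  by (simp add: zderiv_def algebra_simps)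

lemma zderiv_diff: "zderiv (F - G) = zderiv F - zderiv G"
  by (simp add: zderiv_def algebra_simps)

lemma zderiv_mult: "zderiv (F * G) = F * zderiv G + zderiv F * G"
  by (simp add: zderiv_def algebra_simps)

lemma zderiv_const [simp]: "zderiv (fls_const c) = 0"
  by (simp add: zderiv_def)

lemma zderiv_X_inv [simp]: "zderiv fls_X_inv = 1"
proof -
  have "zderiv fls_X_inv = (fls_X * fls_X_inv) ^ 2"
    by (simp add: zderiv_def power2_eq_square algebra_simps)
  also have "fls_X * fls_X_inv = (1 :: complex fls)"
    by (simp add: fls_X_inv_times_conv_shift fls_X_conv_shift_1)
  finally show ?thesis
    by simp
qed

lemma zderiv_zser: "zderiv (zser q) = zser (pderiv q)"
proof (induction q rule: pCons_induct)
  case 0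
  then show ?case
    by (simp add: zderiv_def)
next
  case (pCons c q)
  then show ?case
    by (simp add: zser_pCons zderiv_add zderiv_mult pderiv_pCons zser_add)
qed

definition zneg_part :: "complex fls \<Rightarrow> complex fls" where
  "zneg_part F = F - poly_part F"

lemma zneg_part_nth: "fls_nth (zneg_part F) k = (if k \<le> 0 then 0 else fls_nth F k)"
proof -
  have "fls_nth (poly_part F) k = (\<Sum>j\<in>{fls_subdegree F..0}. if j = k then fls_nth F j else 0)"
    unfolding poly_part_def fls_nth_sum by (intro sum.cong) auto
  also have "\<dots> = (if k \<le> 0 then fls_nth F k else 0)"
    by (auto simp: fls_eq0_below_subdegree)
  finally show ?thesis
    by (simp add: zneg_part_def)
qed

lemma zneg_part_diff: "zneg_part (F - G) = zneg_part F - zneg_part G"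
  by (rule fls_eqI) (simp add: zneg_part_nth)

lemma zneg_part_const_mult: "zneg_part (fls_const c * F) = fls_const c * zneg_part F"
  by (rule fls_eqI) (simp add: zneg_part_nth)

lemma zneg_part_X_inv_mult: "zneg_part (fls_X_inv * F) = fls_X_inv * zneg_part F - fls_const (fls_nth F 1)"
  by (rule fls_eqI) (simp add: zneg_part_nth fls_X_inv_times_conv_shift)

lemma stieltjes_nth: "fls_nth (stieltjes mu) k = (if k \<le> 0 then 0 else mu (nat k - 1))"
  by (simp add: stieltjes_def)

lemma zneg_part_stieltjes_mult_const: "zneg_part (stieltjes mu * fls_const c) = stieltjes mu * fls_const c"
  by (rule fls_eqI) (simp add: zneg_part_nth stieltjes_nth)

lemma eps_eq_zneg_part: "eps mu p n = zneg_part (stieltjes mu * zser (p n))"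
  by (simp add: eps_def zneg_part_def)

(* Index 1 is the coefficient of 1/z. *)

lemma fls_nth_stieltjes_mult_zser: "fls_nth (stieltjes mu * zser q) 1 = momL mu q"
proof -
  have "stieltjes mu * zser q = (\<Sum>j\<le>degree q. fls_const (coeff q j) * fls_shift (int j) (stieltjes mu))"
    unfolding zser_def sum_distrib_left
    by (intro sum.cong refl) (simp add: fls_shifted_times_simps mult.commute)
  then show ?thesis
    unfolding momL_def by (simp add: fls_nth_sum stieltjes_nth nat_add_distrib)
qed

lemma momL_smult: "momL mu (Polynomial.smult c q) = c * momL mu q"
  by (cases "c = 0") (simp_all add: momL_def sum_distrib_left algebra_simps)

lemma three_term_zser:
  assumes "Polynomial.smult a R = [:- c, 1:] * Q - Polynomial.smult a' S"
  shows "fls_const a * zser R = (fls_X_inv - fls_const c) * zser Q - fls_const a' * zser S"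
  using arg_cong[OF assms, of zser] by (simp only: zser_smult zser_diff zser_mult zser_linear)

lemma three_term_zneg_part:
  assumes "Polynomial.smult a R = [:- c, 1:] * Q - Polynomial.smult a' S"
  shows "fls_const a * zneg_part (stieltjes mu * zser R)
       = (fls_X_inv - fls_const c) * zneg_part (stieltjes mu * zser Q)
         - fls_const a' * zneg_part (stieltjes mu * zser S) - fls_const (momL mu Q)"
proof -
  have "fls_const a * (stieltjes mu * zser R) = stieltjes mu * (fls_const a * zser R)"
    by (simp add: algebra_simps)
  also have "\<dots> = fls_X_inv * (stieltjes mu * zser Q) - fls_const c * (stieltjes mu * zser Q)
        - fls_const a' * (stieltjes mu * zser S)"
    unfolding three_term_zser[OF assms] by (simp add: algebra_simps)
  finally have "fls_const a * (stieltjes mu * zser R) = \<dots>" .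
  then have "zneg_part (fls_const a * (stieltjes mu * zser R))
      = zneg_part (fls_X_inv * (stieltjes mu * zser Q) - fls_const c * (stieltjes mu * zser Q)
        - fls_const a' * (stieltjes mu * zser S))"
    by simp
  then show ?thesis
    by (simp only: zneg_part_diff zneg_part_const_mult zneg_part_X_inv_mult fls_nth_stieltjes_mult_zser)
      (simp add: algebra_simps)
qed

lemma orthonormal_initial:
  assumes deg: "\<And>m. degree (p m) = m"
    and orth: "\<And>m k. momL mu (p m * p k) = (if m = k then 1 else 0)"
  obtains c where "p 0 = [:c:]" and "c * momL mu (p 0) = 1"
    and "\<And>m. m \<ge> 1 \<Longrightarrow> momL mu (p m) = 0"
proof
  show p0: "p 0 = [:coeff (p 0) 0:]"
    using degree_0_id[OF deg[of 0]] by simp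
  have mom: "coeff (p 0) 0 * momL mu (p m) = momL mu (p m * p 0)" for m
    by (subst (2) p0) (simp add: momL_smult)
  then show c_mom: "coeff (p 0) 0 * momL mu (p 0) = 1"
    using orth[of 0 0] by simp
  show "momL mu (p m) = 0" if "m \<ge> 1" for m
    using mom[of m] orth[of m 0] c_mom that by auto
qed

lemma orthonormal_first_step:
  assumes rec0: "Polynomial.smult (rec_a p 1) (p 1) = [:- b 0, 1:] * p 0"
  shows "fls_const (rec_a p 1) * zser (p 1) = (fls_X_inv - fls_const (b 0)) * zser (p 0)"
    and "fls_const (rec_a p 1) * eps mu p 1
      = (fls_X_inv - fls_const (b 0)) * eps mu p 0 - fls_const (momL mu (p 0))"
proof -
  have rec0': "Polynomial.smult (rec_a p 1) (p 1) = [:- b 0, 1:] * p 0 - Polynomial.smult 0 (p 0)"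
    using rec0 by simp
  from three_term_zser[OF rec0'] three_term_zneg_part[OF rec0', of mu]
  show "fls_const (rec_a p 1) * zser (p 1) = (fls_X_inv - fls_const (b 0)) * zser (p 0)"
    and "fls_const (rec_a p 1) * eps mu p 1
      = (fls_X_inv - fls_const (b 0)) * eps mu p 0 - fls_const (momL mu (p 0))"
    by (simp_all add: eps_eq_zneg_part)
qed

lemma casorati_system_orthonormal:
  assumes deg: "\<And>m. degree (p m) = m"
    and orth: "\<And>m k. momL mu (p m * p k) = (if m = k then 1 else 0)"
    and rec0: "Polynomial.smult (rec_a p 1) (p 1) = [:- b 0, 1:] * p 0"
    and rec: "\<And>m. m \<ge> 1 \<Longrightarrow>
       Polynomial.smult (rec_a p (m + 1)) (p (m + 1)) = [:- b m, 1:] * p m - Polynomial.smult (rec_a p m) (p (m - 1))"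
  shows "casorati_system zderiv (\<lambda>m. fls_const (rec_a p m)) (\<lambda>m. fls_X_inv - fls_const (b m))
           (\<lambda>m. zser (p m)) (eps mu p)"
proof
  obtain c where p0: "p 0 = [:c:]" and c_mom: "c * momL mu (p 0) = 1"
    and mom: "\<And>m. m \<ge> 1 \<Longrightarrow> momL mu (p m) = 0"
    using orthonormal_initial[OF deg orth] by blast
  show "fls_const (rec_a p (m + 1)) * zser (p (m + 1))
      = (fls_X_inv - fls_const (b m)) * zser (p m) - fls_const (rec_a p m) * zser (p (m - 1))"
    if "m \<ge> 1" for m
    by (rule three_term_zser[OF rec[OF that]])
  show "fls_const (rec_a p (m + 1)) * eps mu p (m + 1)
      = (fls_X_inv - fls_const (b m)) * eps mu p m - fls_const (rec_a p m) * eps mu p (m - 1)"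
    if "m \<ge> 1" for m
    using three_term_zneg_part[OF rec[OF that], of mu] mom[OF that] by (simp add: eps_eq_zneg_part)
  have "fls_const (rec_a p 1) * (eps mu p 0 * zser (p 1) - eps mu p 1 * zser (p 0))
      = eps mu p 0 * (fls_const (rec_a p 1) * zser (p 1)) - fls_const (rec_a p 1) * eps mu p 1 * zser (p 0)"
    by (simp add: algebra_simps)
  also have "\<dots> = fls_const (momL mu (p 0)) * zser (p 0)"
    unfolding orthonormal_first_step[where p = p and b = b, OF rec0] by (simp add: algebra_simps)
  finally show "fls_const (rec_a p 1) * (eps mu p 0 * zser (p 1) - eps mu p 1 * zser (p 0)) = 1"
    using c_mom by (simp add: p0 zser_const mult.commute)
qed (simp_all add: zderiv_add zderiv_diff zderiv_mult)

theorem mainTheorem3: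
  fixes mu :: "nat \<Rightarrow> complex" and p :: "nat \<Rightarrow> complex poly" and b :: "nat \<Rightarrow> complex"
    and W V U :: "complex poly" and n :: nat
  assumes hankel: "\<And>m. det (hankel mu m) \<noteq> 0"
    and deg: "\<And>m. degree (p m) = m"
    and orth: "\<And>m k. momL mu (p m * p k) = (if m = k then 1 else 0)"
    and rec0: "Polynomial.smult (rec_a p 1) (p 1) = [:- b 0, 1:] * p 0"
    and rec: "\<And>m. m \<ge> 1 \<Longrightarrow>
       Polynomial.smult (rec_a p (m + 1)) (p (m + 1)) = [:- b m, 1:] * p m - Polynomial.smult (rec_a p m) (p (m - 1))"
    and W_nz: "W \<noteq> 0"
    and semiclassical: "zser W * zderiv (stieltjes mu) = 2 * zser V * stieltjes mu + zser U"
    and n: "n \<ge> 1"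
  shows "Omega mu p W V (n + 1) = zser [:- b n, 1:] * Theta mu p W V n - Omega mu p W V n \<and>
         zser [:- b n, 1:] * (Omega mu p W V (n + 1) - Omega mu p W V n) =
           zser W + fls_const (rec_a p (n + 1) ^ 2) * Theta mu p W V (n + 1)
                  - fls_const (rec_a p n ^ 2) * Theta mu p W V (n - 1) \<and>
         Omega mu p W V n ^ 2 - fls_const (rec_a p n ^ 2) * Theta mu p W V n * Theta mu p W V (n - 1) =
           zser V ^ 2 + zser W * (\<Sum>i<n. Theta mu p W V i)"
proof -
  obtain c where p0: "p 0 = [:c:]" and c_mom: "c * momL mu (p 0) = 1"
    using orthonormal_initial[OF deg orth] by blast
  interpret casorati_system zderiv "\<lambda>m. fls_const (rec_a p m)" "\<lambda>m. fls_X_inv - fls_const (b m)"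
      "\<lambda>m. zser (p m)" "eps mu p" "zser W" "zser V"
    by (rule casorati_system_orthonormal[OF deg orth rec0 rec])
  have Theta: "Theta mu p W V = theta" and Omega: "Omega mu p W V = omega"
    by (simp_all add: fun_eq_iff Theta_def theta_def Omega_def omega_def zderiv_zser)
  have "omega 1 ^ 2 - fls_const (rec_a p 1) ^ 2 * theta 1 * theta 0 = zser V ^ 2 + zser W * theta 0"
  proof (rule omega_sq_initial)
    show "zderiv (zser (p 0)) = 0"
      by (simp add: p0 zser_const)
    show "eps mu p 0 = stieltjes mu * zser (p 0)"
      by (simp add: eps_eq_zneg_part p0 zser_const zneg_part_stieltjes_mult_const)
    show "fls_const (momL mu (p 0)) * zser (p 0) = 1"
      using c_mom by (simp add: p0 zser_const mult.commute)
  qed (use orthonormal_first_step[where p = p and b = b, OF rec0] semiclassical in simp_all)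
  then show ?thesis
    using omega_Suc[OF n] omega_diff[OF n] omega_sq_telescope[OF n]
    unfolding Theta Omega zser_linear fls_const_power by (simp add: algebra_simps)
qed

end
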